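(* For a weighted cycle $\mathcal{C}_N$ with $N$ odd, \[ h(k)+\overline{h}(k)=1\quad\text{for }2\leq k\leq N. \]
   Context: A weighted cycle $\mathcal{C}_N$ ($N\geq3$) has vertices $v_1,\ldots,v_N$ and edges exactly $\{v_i,v_{i+1}\}$ (indices mod $N$), each with positive symmetric weight $w_{uv}$ ($w_{uv}=0$ for non-edges). $d_u=\sum_vw_{uv}$, $|E(A,B)|:=\sum_{u\in A,v\in B}w_{uv}$, $\mathrm{vol}(A)=\sum_{u\in A}d_u$, $\overline{A}$ the complement. For nonempty $S$, $\phi(S)=|E(S,\overline{S})|/\mathrm{vol}(S)$; $h(k):=\min\max_{1\leq i\leq k}\phi(S_i)$ over all collections of $k$ nonempty pairwise disjoint vertex subsets. For disjoint $V_1,V_2$ with $V_1\cup V_2\neq\emptyset$, $\overline{\phi}(V_1,V_2)=2|E(V_1,V_2)|/\mathrm{vol}(V_1\cup V_2)$; $\overline{h}(k):=\max\min_{1\leq i\leq k}\overline{\phi}(V_{2i-1},V_{2i})$ over all collections of $k$ pairs $(V_1,V_2),\ldots,(V_{2k-1},V_{2k})$ of pairwise disjoint vertex subsets with $V_{2i-1}\cup V_{2i}\neq\emptyset$ for each $i$. *)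

theory Defs
  imports Complex_Main
begin

text \<open>Weighted graphs on the vertex set {0..<N} (vertex v_i is i-1),
  given by a symmetric weight function W (W u v = 0 for non-edges).\<close>

definition cycle_weight :: "nat \<Rightarrow> (nat \<Rightarrow> real) \<Rightarrow> nat \<Rightarrow> nat \<Rightarrow> real" where
  "cycle_weight N w u v =
     (if u < N \<and> v < N \<and> v = (u + 1) mod N then w u
      else if u < N \<and> v < N \<and> u = (v + 1) mod N then w v
      else 0)"

definition deg :: "nat \<Rightarrow> (nat \<Rightarrow> nat \<Rightarrow> real) \<Rightarrow> nat \<Rightarrow> real" where
  "deg N W u = (\<Sum>v\<in>{0..<N}. W u v)"

definition cut :: "(nat \<Rightarrow> nat \<Rightarrow> real) \<Rightarrow> nat set \<Rightarrow> nat set \<Rightarrow> real" where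
  "cut W A B = (\<Sum>u\<in>A. \<Sum>v\<in>B. W u v)"

definition vol :: "nat \<Rightarrow> (nat \<Rightarrow> nat \<Rightarrow> real) \<Rightarrow> nat set \<Rightarrow> real" where
  "vol N W A = (\<Sum>u\<in>A. deg N W u)"

definition expansion :: "nat \<Rightarrow> (nat \<Rightarrow> nat \<Rightarrow> real) \<Rightarrow> nat set \<Rightarrow> real" where
  "expansion N W S = cut W S ({0..<N} - S) / vol N W S"

definition bipart_ratio :: "nat \<Rightarrow> (nat \<Rightarrow> nat \<Rightarrow> real) \<Rightarrow> nat set \<Rightarrow> nat set \<Rightarrow> real" where
  "bipart_ratio N W V1 V2 = 2 * cut W V1 V2 / vol N W (V1 \<union> V2)"

definition multiway_const :: "nat \<Rightarrow> (nat \<Rightarrow> nat \<Rightarrow> real) \<Rightarrow> nat \<Rightarrow> real" where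
  "multiway_const N W k = Min {Max {expansion N W (S i) | i. i < k} | S.
      (\<forall>i<k. S i \<subseteq> {0..<N} \<and> S i \<noteq> {}) \<and>
      (\<forall>i<k. \<forall>j<k. i \<noteq> j \<longrightarrow> S i \<inter> S j = {})}"

definition dual_multiway_const :: "nat \<Rightarrow> (nat \<Rightarrow> nat \<Rightarrow> real) \<Rightarrow> nat \<Rightarrow> real" where
  "dual_multiway_const N W k = Max {Min {bipart_ratio N W (V (2*i)) (V (2*i+1)) | i. i < k} | V.
      (\<forall>i<2*k. V i \<subseteq> {0..<N}) \<and>
      (\<forall>i<2*k. \<forall>j<2*k. i \<noteq> j \<longrightarrow> V i \<inter> V j = {}) \<and>
      (\<forall>i<k. V (2*i) \<union> V (2*i+1) \<noteq> {})}"

end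

theory Submission
  imports Defs "HOL-Library.FuncSet"
begin

(* For a set S of positive volume, 1 - phi(S) = cut(S,S) / vol(S), and for a split S = V1 \<union> V2
   into disjoint parts, 2 cut(V1,V2) = cut(S,S) - cut(V1,V1) - cut(V2,V2). Hence
   phibar(V1,V2) \<le> 1 - phi(V1 \<union> V2), with equality when V1 and V2 span no edges.
   Merging each pair of a family for hbar(k) gives hbar(k) \<le> 1 - h(k). Conversely, for k \<ge> 2
   no member of a disjoint family covers the whole cycle, so each member induces a union of
   paths; splitting it by the parity of the distance from a missing vertex produces two sets
   spanning no edges, whence hbar(k) \<ge> 1 - h(k). *)

section \<open>Cuts and volumes in symmetric weighted graphs\<close>

lemma cut_commute:
  assumes "\<And>u v. W u v = W v u"
  shows "cut W A B = cut W B A"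
  unfolding cut_def using assms by (subst sum.swap) simp

lemma cut_nonneg: "(\<And>u v. W u v \<ge> 0) \<Longrightarrow> cut W A B \<ge> 0"
  unfolding cut_def by (intro sum_nonneg) auto

lemma cut_eq_0: "(\<And>u v. u \<in> A \<Longrightarrow> v \<in> A \<Longrightarrow> W u v = 0) \<Longrightarrow> cut W A A = 0"
  unfolding cut_def by simp

lemma cut_Un_self:
  assumes "\<And>u v. W u v = W v u" "A \<inter> B = {}" "finite A" "finite B"
  shows "cut W (A \<union> B) (A \<union> B) = cut W A A + 2 * cut W A B + cut W B B"
  using assms(2-4) cut_commute[of W B A, OF assms(1)]
  by (simp add: cut_def sum.union_disjoint sum.distrib)

lemma vol_eq_cut_self_plus_boundary:
  assumes "S \<subseteq> {0..<N}"
  shows "vol N W S = cut W S S + cut W S ({0..<N} - S)"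
proof -
  have "deg N W u = (\<Sum>v\<in>S. W u v) + (\<Sum>v\<in>{0..<N} - S. W u v)" for u
    unfolding deg_def using assms by (simp add: sum.subset_diff[of S "{0..<N}"])
  then show ?thesis by (simp add: vol_def cut_def sum.distrib)
qed

lemma one_minus_expansion:
  assumes "S \<subseteq> {0..<N}" "vol N W S > 0"
  shows "1 - expansion N W S = cut W S S / vol N W S"
  using vol_eq_cut_self_plus_boundary[OF assms(1), of W] assms(2)
  by (simp add: expansion_def field_simps)

lemma bipart_ratio_eq:
  assumes "\<And>u v. W u v = W v u" "V1 \<inter> V2 = {}" "V1 \<union> V2 \<subseteq> {0..<N}" "vol N W (V1 \<union> V2) > 0"
  shows "bipart_ratio N W V1 V2
    = 1 - expansion N W (V1 \<union> V2) - (cut W V1 V1 + cut W V2 V2) / vol N W (V1 \<union> V2)"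
proof -
  have "finite V1" "finite V2" using assms(3) finite_subset by auto
  then show ?thesis
    using cut_Un_self[OF assms(1,2)] one_minus_expansion[OF assms(3,4)] assms(4)
    by (simp add: bipart_ratio_def field_simps)
qed

lemma bipart_ratio_le_one_minus_expansion:
  assumes "\<And>u v. W u v = W v u" "\<And>u v. W u v \<ge> 0"
    and "V1 \<inter> V2 = {}" "V1 \<union> V2 \<subseteq> {0..<N}" "vol N W (V1 \<union> V2) > 0"
  shows "bipart_ratio N W V1 V2 \<le> 1 - expansion N W (V1 \<union> V2)"
  using bipart_ratio_eq[OF assms(1,3-5)] cut_nonneg[of W, OF assms(2)] assms(5)
  by (simp add: add_nonneg_nonneg)

section \<open>The weighted cycle\<close>

lemma cycle_successor_not_predecessor:
  assumes "(N::nat) \<ge> 3" "u < N" "v = (u + 1) mod N"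
  shows "u \<noteq> (v + 1) mod N"
proof (cases "u + 1 < N")
  case True
  then have "(v + 1) mod N = (u + 2) mod N" using assms(3) by simp
  moreover have "(u + 2) mod N \<noteq> u"
  proof (cases "u + 2 < N")
    case False
    then have "u + 2 = N" using True by simp
    then show ?thesis using assms(1) by simp
  qed simp
  ultimately show ?thesis by simp
next
  case False
  then have "u + 1 = N" using assms(2) by simp
  then have "u = N - 1" "v = 0" using assms(3) by auto
  then show ?thesis using assms(1) by simp
qed

lemma cycle_weight_sym:
  assumes "N \<ge> 3"
  shows "cycle_weight N w u v = cycle_weight N w v u"
  using cycle_successor_not_predecessor[OF assms] by (auto simp: cycle_weight_def)

lemma cycle_weight_nonneg: "(\<And>i. i < N \<Longrightarrow> w i > 0) \<Longrightarrow> cycle_weight N w u v \<ge> 0"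
  unfolding cycle_weight_def by (auto intro: less_imp_le)

lemma cycle_vol_pos:
  assumes "N \<ge> 3" "\<And>i. i < N \<Longrightarrow> w i > 0" "S \<subseteq> {0..<N}" "S \<noteq> {}"
  shows "vol N (cycle_weight N w) S > 0"
  unfolding vol_def
proof (rule sum_pos)
  show "finite S" using assms(3) finite_subset by blast
  fix u assume "u \<in> S"
  then have u: "u < N" using assms(3) by auto
  have "0 < cycle_weight N w u ((u + 1) mod N)"
    using assms(1,2) u by (simp add: cycle_weight_def)
  also have "\<dots> \<le> deg N (cycle_weight N w) u"
    unfolding deg_def using assms(1,2)
    by (intro member_le_sum) (auto intro: cycle_weight_nonneg)
  finally show "deg N (cycle_weight N w) u > 0" .
qed (use assms(4) in auto)

definition cycle_offset :: "nat \<Rightarrow> nat \<Rightarrow> nat \<Rightarrow> nat" where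
  "cycle_offset N m x = (if m \<le> x then x - m else x + N - m)"

lemma cycle_offset_successor_parity:
  assumes "u < N" "m < N" "u \<noteq> m" "(u + 1) mod N \<noteq> m"
  shows "even (cycle_offset N m ((u + 1) mod N)) \<longleftrightarrow> odd (cycle_offset N m u)"
proof (cases "u + 1 < N")
  case True
  then show ?thesis using assms by (auto simp: cycle_offset_def)
next
  case False
  then have "u + 1 = N" using assms(1) by simp
  then have "u = N - 1" "(u + 1) mod N = 0" by auto
  then show ?thesis using assms by (auto simp: cycle_offset_def)
qed

text \<open>Consecutive vertices of the cycle have offsets from m of different parity, except
  across the edge that ends at m; so once m is removed, equal parity means non-adjacent.\<close>

lemma cycle_weight_eq_0_same_offset_parity:
  assumes "m < N" "u \<noteq> m" "v \<noteq> m"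
    and "even (cycle_offset N m u) \<longleftrightarrow> even (cycle_offset N m v)"
  shows "cycle_weight N w u v = 0"
proof (rule ccontr)
  assume "cycle_weight N w u v \<noteq> 0"
  then have "u < N" "v < N" "v = (u + 1) mod N \<or> u = (v + 1) mod N"
    by (auto simp: cycle_weight_def split: if_splits)
  then show False
    using assms cycle_offset_successor_parity[of u N m] cycle_offset_successor_parity[of v N m]
    by auto
qed

lemma cycle_bipart_ratio_offset_split:
  assumes "N \<ge> 3" "\<And>i. i < N \<Longrightarrow> w i > 0" "S \<subseteq> {0..<N}" "S \<noteq> {}" "m < N" "m \<notin> S"
  defines "C \<equiv> {x. even (cycle_offset N m x)}"
  shows "bipart_ratio N (cycle_weight N w) (S \<inter> C) (S - C) = 1 - expansion N (cycle_weight N w) S"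
proof -
  let ?W = "cycle_weight N w"
  have S: "S \<inter> C \<union> (S - C) = S" by auto
  have "cut ?W (S \<inter> C) (S \<inter> C) = 0" "cut ?W (S - C) (S - C) = 0"
    using assms(5,6) by (auto intro!: cut_eq_0 cycle_weight_eq_0_same_offset_parity simp: C_def)
  moreover have "bipart_ratio N ?W (S \<inter> C) (S - C) = 1 - expansion N ?W (S \<inter> C \<union> (S - C))
      - (cut ?W (S \<inter> C) (S \<inter> C) + cut ?W (S - C) (S - C)) / vol N ?W (S \<inter> C \<union> (S - C))"
    using cycle_weight_sym[OF assms(1)] cycle_vol_pos[OF assms(1-4)] assms(3)
    by (intro bipart_ratio_eq) (auto simp: S)
  ultimately show ?thesis by (simp add: S)
qed

section \<open>Families of disjoint sets\<close>

definition disjoint_nonempty_family :: "nat \<Rightarrow> nat \<Rightarrow> (nat \<Rightarrow> nat set) \<Rightarrow> bool" where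
  "disjoint_nonempty_family N k S \<longleftrightarrow> (\<forall>i<k. S i \<subseteq> {0..<N} \<and> S i \<noteq> {}) \<and>
      (\<forall>i<k. \<forall>j<k. i \<noteq> j \<longrightarrow> S i \<inter> S j = {})"

definition disjoint_pair_family :: "nat \<Rightarrow> nat \<Rightarrow> (nat \<Rightarrow> nat set) \<Rightarrow> bool" where
  "disjoint_pair_family N k V \<longleftrightarrow> (\<forall>i<2*k. V i \<subseteq> {0..<N}) \<and>
      (\<forall>i<2*k. \<forall>j<2*k. i \<noteq> j \<longrightarrow> V i \<inter> V j = {}) \<and>
      (\<forall>i<k. V (2*i) \<union> V (2*i+1) \<noteq> {})"

definition max_expansion :: "nat \<Rightarrow> (nat \<Rightarrow> nat \<Rightarrow> real) \<Rightarrow> nat \<Rightarrow> (nat \<Rightarrow> nat set) \<Rightarrow> real" where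
  "max_expansion N W k S = Max ((\<lambda>i. expansion N W (S i)) ` {..<k})"

definition min_bipart_ratio :: "nat \<Rightarrow> (nat \<Rightarrow> nat \<Rightarrow> real) \<Rightarrow> nat \<Rightarrow> (nat \<Rightarrow> nat set) \<Rightarrow> real" where
  "min_bipart_ratio N W k V = Min ((\<lambda>i. bipart_ratio N W (V (2*i)) (V (2*i+1))) ` {..<k})"

lemma max_expansion_cong:
  "(\<And>i. i < k \<Longrightarrow> S i = S' i) \<Longrightarrow> max_expansion N W k S = max_expansion N W k S'"
  unfolding max_expansion_def by (metis image_cong lessThan_iff)

lemma min_bipart_ratio_cong:
  assumes "\<And>i. i < 2*k \<Longrightarrow> V i = V' i"
  shows "min_bipart_ratio N W k V = min_bipart_ratio N W k V'"
proof -
  have "bipart_ratio N W (V (2*i)) (V (2*i+1)) = bipart_ratio N W (V' (2*i)) (V' (2*i+1))"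
    if "i < k" for i
    using assms[of "2*i"] assms[of "2*i+1"] that by simp
  then show ?thesis unfolding min_bipart_ratio_def by (intro arg_cong[where f = Min] image_cong) auto
qed

lemma setcompr_lessThan_eq_image: "{f i | i. i < (k::nat)} = f ` {..<k}"
  by auto

lemma multiway_const_eq:
  "multiway_const N W k = Min (max_expansion N W k ` Collect (disjoint_nonempty_family N k))"
  unfolding multiway_const_def max_expansion_def disjoint_nonempty_family_def
    setcompr_lessThan_eq_image
  by (rule arg_cong[where f = Min]) blast

lemma dual_multiway_const_eq:
  "dual_multiway_const N W k = Max (min_bipart_ratio N W k ` Collect (disjoint_pair_family N k))"
  unfolding dual_multiway_const_def min_bipart_ratio_def disjoint_pair_family_def
    setcompr_lessThan_eq_image
  by (rule arg_cong[where f = Max]) blast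

lemma finite_image_of_bounded_families:
  fixes m :: nat
  assumes "finite X" "\<And>S. P S \<Longrightarrow> \<forall>i<m. S i \<subseteq> X"
    and "\<And>S S'. \<forall>i<m. S i = S' i \<Longrightarrow> F S = F S'"
  shows "finite (F ` Collect P)"
proof (rule finite_subset)
  show "F ` Collect P \<subseteq> F ` (\<Pi>\<^sub>E i\<in>{..<m}. Pow X)"
  proof
    fix x assume "x \<in> F ` Collect P"
    then obtain S where S: "x = F S" "P S" by blast
    have "restrict S {..<m} \<in> (\<Pi>\<^sub>E i\<in>{..<m}. Pow X)" using assms(2)[OF S(2)] by auto
    moreover have "F S = F (restrict S {..<m})" by (rule assms(3)) simp
    ultimately show "x \<in> F ` (\<Pi>\<^sub>E i\<in>{..<m}. Pow X)" using S(1) by blast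
  qed
qed (use assms(1) in \<open>intro finite_imageI finite_PiE, auto\<close>)

lemma finite_max_expansion_image:
  "finite (max_expansion N W k ` Collect (disjoint_nonempty_family N k))"
proof (rule finite_image_of_bounded_families)
  show "\<forall>i<k. S i \<subseteq> {0..<N}" if "disjoint_nonempty_family N k S" for S
    using that by (simp add: disjoint_nonempty_family_def)
  show "max_expansion N W k S = max_expansion N W k S'" if "\<forall>i<k. S i = S' i" for S S'
    by (rule max_expansion_cong) (use that in blast)
qed simp

lemma finite_min_bipart_ratio_image:
  "finite (min_bipart_ratio N W k ` Collect (disjoint_pair_family N k))"
proof (rule finite_image_of_bounded_families)
  show "\<forall>i<2*k. V i \<subseteq> {0..<N}" if "disjoint_pair_family N k V" for V
    using that by (simp add: disjoint_pair_family_def)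
  show "min_bipart_ratio N W k V = min_bipart_ratio N W k V'" if "\<forall>i<2*k. V i = V' i" for V V'
    by (rule min_bipart_ratio_cong) (use that in blast)
qed simp

lemma member_misses_vertex:
  assumes "disjoint_nonempty_family N k S" "2 \<le> k" "i < k"
  obtains m where "m < N" "m \<notin> S i"
proof -
  define j where "j = (if i = 0 then 1 else 0 :: nat)"
  have j: "j < k" "j \<noteq> i" unfolding j_def using assms(2) by auto
  have "S j \<noteq> {}" "S j \<subseteq> {0..<N}" "S i \<inter> S j = {}"
    using assms(1,3) j unfolding disjoint_nonempty_family_def by blast+
  then obtain m where "m \<in> S j" by blast
  then have "m < N" "m \<notin> S i" using \<open>S j \<subseteq> {0..<N}\<close> \<open>S i \<inter> S j = {}\<close> by auto
  then show thesis by (rule that)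
qed

lemma disjoint_pair_family_merge:
  assumes "disjoint_pair_family N k V"
  shows "disjoint_nonempty_family N k (\<lambda>i. V (2*i) \<union> V (2*i+1))"
  unfolding disjoint_nonempty_family_def
proof (intro conjI allI impI)
  fix i j assume ij: "i < k" "j < k" "i \<noteq> j"
  have "V a \<inter> V b = {}" if "a \<in> {2*i, 2*i+1}" "b \<in> {2*j, 2*j+1}" for a b
  proof -
    have "a < 2*k" "b < 2*k" "a \<noteq> b" using ij that by auto
    then show ?thesis using assms by (auto simp: disjoint_pair_family_def)
  qed
  then show "(V (2*i) \<union> V (2*i+1)) \<inter> (V (2*j) \<union> V (2*j+1)) = {}" by blast
qed (use assms in \<open>auto simp: disjoint_pair_family_def\<close>)

lemma disjoint_nonempty_family_split:
  assumes "disjoint_nonempty_family N k S"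
  shows "disjoint_pair_family N k
    (\<lambda>j. if even j then S (j div 2) \<inter> C (j div 2) else S (j div 2) - C (j div 2))"
    (is "disjoint_pair_family N k ?V")
  unfolding disjoint_pair_family_def
proof (intro conjI allI impI)
  fix i assume "i < 2*k"
  then have "S (i div 2) \<subseteq> {0..<N}" using assms by (auto simp: disjoint_nonempty_family_def)
  then show "?V i \<subseteq> {0..<N}" by auto
next
  fix i j :: nat assume ij: "i < 2*k" "j < 2*k" "i \<noteq> j"
  show "?V i \<inter> ?V j = {}"
  proof (cases "i div 2 = j div 2")
    case True
    then have "even i \<noteq> even j" using ij(3) by (metis div_mult_mod_eq parity_cases)
    then show ?thesis using True by auto
  next
    case False
    then have "S (i div 2) \<inter> S (j div 2) = {}"
      using assms ij by (auto simp: disjoint_nonempty_family_def)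
    then show ?thesis by auto
  qed
next
  fix i assume "i < k"
  then have "S i \<noteq> {}" using assms by (auto simp: disjoint_nonempty_family_def)
  then show "?V (2*i) \<union> ?V (2*i+1) \<noteq> {}" by auto
qed

lemma Min_one_minus_image:
  fixes f :: "'a \<Rightarrow> real"
  assumes "finite I" "I \<noteq> {}"
  shows "Min ((\<lambda>i. 1 - f i) ` I) = 1 - Max (f ` I)"
proof -
  have "(\<lambda>i. 1 - f i) ` I = (+) 1 ` uminus ` f ` I" by (auto simp: image_image)
  then show ?thesis
    using assms minus_Max_eq_Min[of "f ` I"] Min_add_commute[of "uminus ` f ` I" "\<lambda>x. x" 1]
    by (simp add: image_image)
qed

lemma cycle_split_family:
  assumes "N \<ge> 3" "\<And>i. i < N \<Longrightarrow> w i > 0" "2 \<le> k"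
    and "disjoint_nonempty_family N k S"
  obtains V where "disjoint_pair_family N k V"
    "min_bipart_ratio N (cycle_weight N w) k V = 1 - max_expansion N (cycle_weight N w) k S"
proof -
  let ?W = "cycle_weight N w"
  have "\<forall>i. \<exists>m. i < k \<longrightarrow> m < N \<and> m \<notin> S i"
    using member_misses_vertex[OF assms(4,3)] by metis
  then obtain m where m: "\<And>i. i < k \<Longrightarrow> m i < N \<and> m i \<notin> S i" by metis
  define C where "C i = {x. even (cycle_offset N (m i) x)}" for i
  define V where "V j = (if even j then S (j div 2) \<inter> C (j div 2) else S (j div 2) - C (j div 2))"
    for j
  have "bipart_ratio N ?W (V (2*i)) (V (2*i+1)) = 1 - expansion N ?W (S i)" if "i < k" for i
    using cycle_bipart_ratio_offset_split[OF assms(1,2), where S = "S i" and m = "m i"]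
      m[OF that] assms(4) that
    by (simp add: V_def C_def disjoint_nonempty_family_def)
  then have "min_bipart_ratio N ?W k V = Min ((\<lambda>i. 1 - expansion N ?W (S i)) ` {..<k})"
    unfolding min_bipart_ratio_def by (intro arg_cong[where f = Min] image_cong) auto
  also have "\<dots> = 1 - max_expansion N ?W k S"
    unfolding max_expansion_def using assms(3)
    by (intro Min_one_minus_image) (auto simp: lessThan_empty_iff)
  finally show thesis
    using that disjoint_nonempty_family_split[OF assms(4), of C] unfolding V_def by blast
qed

lemma cycle_min_bipart_ratio_le:
  assumes "N \<ge> 3" "\<And>i. i < N \<Longrightarrow> w i > 0" "0 < k" "disjoint_pair_family N k V"
  shows "min_bipart_ratio N (cycle_weight N w) k V
    \<le> 1 - max_expansion N (cycle_weight N w) k (\<lambda>i. V (2*i) \<union> V (2*i+1))"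
proof -
  let ?W = "cycle_weight N w"
  let ?S = "\<lambda>i. V (2*i) \<union> V (2*i+1)"
  have "max_expansion N ?W k ?S \<in> (\<lambda>i. expansion N ?W (?S i)) ` {..<k}"
    unfolding max_expansion_def using assms(3) by (intro Max_in) auto
  then obtain i where i: "i < k" "max_expansion N ?W k ?S = expansion N ?W (?S i)" by auto
  have "min_bipart_ratio N ?W k V \<le> bipart_ratio N ?W (V (2*i)) (V (2*i+1))"
    unfolding min_bipart_ratio_def using i(1) by (intro Min_le) auto
  also have "\<dots> \<le> 1 - expansion N ?W (?S i)"
    using assms(4) disjoint_pair_family_merge[OF assms(4)] i(1)
    by (intro bipart_ratio_le_one_minus_expansion cycle_weight_sym cycle_weight_nonneg
        cycle_vol_pos assms(1,2))
      (auto simp: disjoint_pair_family_def disjoint_nonempty_family_def)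
  finally show ?thesis using i(2) by simp
qed

lemma Max_eq_one_minus_Min:
  fixes A B :: "real set"
  assumes "finite A" "finite B" "A \<noteq> {}"
    and "\<And>x. x \<in> A \<Longrightarrow> 1 - x \<in> B" and "\<And>y. y \<in> B \<Longrightarrow> \<exists>x\<in>A. y \<le> 1 - x"
  shows "Max B = 1 - Min A"
proof (rule antisym)
  have "1 - Min A \<in> B" using assms(1,3) by (intro assms(4) Min_in)
  then show "1 - Min A \<le> Max B" using assms(2) by (rule Max_ge[rotated])
  have "Max B \<in> B" using assms(2) \<open>1 - Min A \<in> B\<close> by (intro Max_in) auto
  then obtain x where "x \<in> A" "Max B \<le> 1 - x" using assms(5) by blast
  moreover have "Min A \<le> x" using assms(1) \<open>x \<in> A\<close> by (rule Min_le)
  ultimately show "Max B \<le> 1 - Min A" by linarith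
qed

theorem proposition7p2:
  fixes N k :: nat and w :: "nat \<Rightarrow> real"
  assumes "N \<ge> 3" and "odd N"
    and "\<And>i. i < N \<Longrightarrow> w i > 0"
    and "2 \<le> k" and "k \<le> N"
  shows "multiway_const N (cycle_weight N w) k + dual_multiway_const N (cycle_weight N w) k = 1"
proof -
  let ?W = "cycle_weight N w"
  let ?A = "max_expansion N ?W k ` Collect (disjoint_nonempty_family N k)"
  let ?B = "min_bipart_ratio N ?W k ` Collect (disjoint_pair_family N k)"
  have "finite ?A" by (rule finite_max_expansion_image)
  moreover have "finite ?B" by (rule finite_min_bipart_ratio_image)
  moreover have "disjoint_nonempty_family N k (\<lambda>i. {i})"
    using assms(5) by (auto simp: disjoint_nonempty_family_def)
  then have "?A \<noteq> {}" by blast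
  moreover have "1 - x \<in> ?B" if "x \<in> ?A" for x
  proof -
    obtain S where S: "disjoint_nonempty_family N k S" "x = max_expansion N ?W k S"
      using \<open>x \<in> ?A\<close> by blast
    obtain V where V: "disjoint_pair_family N k V"
      "min_bipart_ratio N ?W k V = 1 - max_expansion N ?W k S"
      by (rule cycle_split_family[OF assms(1,3,4) S(1)])
    show ?thesis using V S(2) by (intro image_eqI[where x = V]) simp_all
  qed
  moreover have "\<exists>x\<in>?A. y \<le> 1 - x" if "y \<in> ?B" for y
  proof -
    obtain V where V: "disjoint_pair_family N k V" "y = min_bipart_ratio N ?W k V"
      using \<open>y \<in> ?B\<close> by blast
    let ?S = "\<lambda>i. V (2*i) \<union> V (2*i+1)"
    have "max_expansion N ?W k ?S \<in> ?A"
      using disjoint_pair_family_merge[OF V(1)] by (intro imageI) simp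
    moreover have "y \<le> 1 - max_expansion N ?W k ?S"
      using cycle_min_bipart_ratio_le[OF assms(1,3) _ V(1)] V(2) assms(4) by simp
    ultimately show ?thesis ..
  qed
  ultimately have "Max ?B = 1 - Min ?A" by (rule Max_eq_one_minus_Min)
  then show ?thesis by (simp add: multiway_const_eq dual_multiway_const_eq)
qed

end
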